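(* Let $p$ be a distinguished homogeneous quadratic vector field on $\mathbb{C}^3$ with parameters satisfying $\gamma_{13}=\gamma_{21}=\gamma_{32}=0$, and with the remaining six parameters $\gamma_{11},\gamma_{12},\gamma_{22},\gamma_{23},\gamma_{31},\gamma_{33}$ algebraically independent over $\mathbb{Q}$. Then each coordinate function $x_i$, $1\le i\le3$, is a semi-invariant of $p$, and $p$ satisfies property E.
   Context: A homogeneous quadratic map $p:\mathbb{C}^3\to\mathbb{C}^3$ has an idempotent $v$ if $p(v)=v\ne0$. $p$ is distinguished if (i) $e_1,e_2,e_3$ are idempotents; (ii) there are three further idempotents $v_i=\gamma_{i1}e_1+\gamma_{i2}e_2+\gamma_{i3}e_3$, $i=1,2,3$; (iii) the matrix with rows $(\gamma_{i1}\gamma_{i2},\gamma_{i2}\gamma_{i3},\gamma_{i3}\gamma_{i1})$, $i=1,2,3$, is invertible. A semi-invariant of $p$ is a nonconstant polynomial $\psi$ with $X_p(\psi)=\lambda\psi$ for a polynomial $\lambda$, $X_p=\sum p_i\partial/\partial x_i$. Poincaré transform at $v\ne0$: choose regular $T$ with $Tv=e_1$, put $F=T\circ p\circ T^{-1}$, $G_i(x_1,\dots,x_4)=F_i(x_1,x_2,x_3)$ (homogeneous of degree 2), and let $p_v^*(x_2,x_3,x_4)$ have components $-G_1x_2+G_2$, $-G_1x_3+G_3$, $-G_1x_4$ evaluated at $(1,x_2,x_3,x_4)$. Property E: for every $v\ne0$ with $p(v)\in\mathbb{C}v$, the eigenvalues $\lambda_1,\lambda_2,\lambda_3$ of $Dp_v^*(0)$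 are linearly independent over $\mathbb{Q}$, or satisfy $\dim_{\mathbb{Q}}(\sum\mathbb{Q}\lambda_i)=2$ together with $\sum m_i\lambda_i=0$ for some positive integers $m_i$. *)

theory Defs
  imports "HOL-Analysis.Analysis" "HOL-Library.Numeral_Type"
begin

type_synonym cvec = "complex ^ 3"

definition hom_quadratic :: "(cvec \<Rightarrow> cvec) \<Rightarrow> bool" where
  "hom_quadratic p \<longleftrightarrow> (\<exists>c :: 3 \<Rightarrow> 3 \<Rightarrow> 3 \<Rightarrow> complex.
      \<forall>x i. p x $ i = (\<Sum>j\<in>UNIV. \<Sum>k\<in>UNIV. c i j k * x $ j * x $ k))"

definition idempotent :: "(cvec \<Rightarrow> cvec) \<Rightarrow> cvec \<Rightarrow> bool" where
  "idempotent p v \<longleftrightarrow> p v = v \<and> v \<noteq> 0"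

definition e :: "3 \<Rightarrow> cvec" where
  "e i = axis i 1"

text \<open>Distinguished, with parameter matrix g (row i = coordinates of v_i).\<close>
definition distinguished :: "(cvec \<Rightarrow> cvec) \<Rightarrow> complex^3^3 \<Rightarrow> bool" where
  "distinguished p g \<longleftrightarrow> hom_quadratic p
     \<and> (\<forall>i. idempotent p (e i))
     \<and> (\<forall>i. idempotent p (g $ i))
     \<and> (\<forall>i j. g $ i \<noteq> e j)
     \<and> (\<forall>i j. i \<noteq> j \<longrightarrow> g $ i \<noteq> g $ j)
     \<and> invertible ((\<chi> i. vector [g$i$1 * g$i$2, g$i$2 * g$i$3, g$i$3 * g$i$1]) :: complex^3^3)"

inductive_set polyfun :: "(cvec \<Rightarrow> complex) set" where
  const: "(\<lambda>x. c) \<in> polyfun"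
| coord: "(\<lambda>x. x $ i) \<in> polyfun"
| add: "f \<in> polyfun \<Longrightarrow> g \<in> polyfun \<Longrightarrow> (\<lambda>x. f x + g x) \<in> polyfun"
| mult: "f \<in> polyfun \<Longrightarrow> g \<in> polyfun \<Longrightarrow> (\<lambda>x. f x * g x) \<in> polyfun"

definition lie_deriv :: "(cvec \<Rightarrow> cvec) \<Rightarrow> (cvec \<Rightarrow> complex) \<Rightarrow> cvec \<Rightarrow> complex" where
  "lie_deriv p \<psi> x = frechet_derivative \<psi> (at x) (p x)"

definition semi_invariant :: "(cvec \<Rightarrow> cvec) \<Rightarrow> (cvec \<Rightarrow> complex) \<Rightarrow> bool" where
  "semi_invariant p \<psi> \<longleftrightarrow> \<psi> \<in> polyfun \<and> (\<exists>x y. \<psi> x \<noteq> \<psi> y)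
     \<and> (\<exists>lam\<in>polyfun. \<forall>x. lie_deriv p \<psi> x = lam x * \<psi> x)"

text \<open>Poincare transform p*_v built with the regular matrix T (T v = e_1).\<close>
definition poincare :: "(cvec \<Rightarrow> cvec) \<Rightarrow> complex^3^3 \<Rightarrow> cvec \<Rightarrow> cvec" where
  "poincare p T y =
     (let F = (\<lambda>x. T *v p (matrix_inv T *v x));
          f = F (vector [1, y$1, y$2])
      in vector [- (f$1) * y$1 + f$2, - (f$1) * y$2 + f$3, - (f$1) * y$3])"

definition eigenvalues3 :: "complex^3^3 \<Rightarrow> complex \<Rightarrow> complex \<Rightarrow> complex \<Rightarrow> bool" where
  "eigenvalues3 A l1 l2 l3 \<longleftrightarrow> (\<forall>t. det (mat t - A) = (t - l1) * (t - l2) * (t - l3))"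

definition Q_indep :: "complex list \<Rightarrow> bool" where
  "Q_indep l \<longleftrightarrow> (\<forall>q :: rat list. length q = length l \<and>
      (\<Sum>i<length l. of_rat (q!i) * l!i) = 0 \<longrightarrow> (\<forall>i<length l. q!i = 0))"

text \<open>dim_Q (Q l1 + Q l2 + Q l3) = 2.\<close>
definition Q_dim2 :: "complex \<Rightarrow> complex \<Rightarrow> complex \<Rightarrow> bool" where
  "Q_dim2 l1 l2 l3 \<longleftrightarrow> \<not> Q_indep [l1, l2, l3]
     \<and> (Q_indep [l1, l2] \<or> Q_indep [l2, l3] \<or> Q_indep [l1, l3])"

definition property_E :: "(cvec \<Rightarrow> cvec) \<Rightarrow> bool" where
  "property_E p \<longleftrightarrow> (\<forall>v T l1 l2 l3. v \<noteq> 0 \<and> (\<exists>c. p v = c *s v)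
      \<and> invertible T \<and> T *v v = e 1
      \<and> eigenvalues3 (matrix (frechet_derivative (poincare p T) (at 0))) l1 l2 l3
      \<longrightarrow> Q_indep [l1, l2, l3]
        \<or> (Q_dim2 l1 l2 l3 \<and> (\<exists>m1 m2 m3 :: nat. m1 > 0 \<and> m2 > 0 \<and> m3 > 0
              \<and> of_nat m1 * l1 + of_nat m2 * l2 + of_nat m3 * l3 = 0)))"

definition alg_indep :: "nat \<Rightarrow> (nat \<Rightarrow> complex) \<Rightarrow> bool" where
  "alg_indep n z \<longleftrightarrow> (\<forall>S (c :: (nat \<Rightarrow> nat) \<Rightarrow> rat).
      finite S \<and> S \<subseteq> {\<alpha>. \<forall>i\<ge>n. \<alpha> i = 0}
      \<and> (\<Sum>\<alpha>\<in>S. of_rat (c \<alpha>) * (\<Prod>i<n. z i ^ \<alpha> i)) = 0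
      \<longrightarrow> (\<forall>\<alpha>\<in>S. c \<alpha> = 0))"

end

theory Submission
  imports Defs "HOL-Computational_Algebra.Polynomial" "HOL-Combinatorics.Permutations"
begin

text \<open>
  The idempotents \<open>e\<^sub>i\<close> together with the three further idempotents, each lying in a
  coordinate plane, determine the homogeneous quadratic map completely: they force
  \<open>p\<^sub>i(x) = x\<^sub>i (M x)\<^sub>i\<close>, a Lotka--Volterra field whose matrix \<open>M\<close> has unit diagonal and
  off-diagonal entries rational in the six parameters. Hence every coordinate \<open>x\<^sub>i\<close> is a
  semi-invariant, with cofactor \<open>(M x)\<^sub>i\<close>.

  For property E let \<open>p v = c v\<close> with \<open>v \<noteq> 0\<close>. Then \<open>c \<noteq> 0\<close> and \<open>w = v / c\<close> is one of
  seven idempotents: a vertex \<open>e\<^sub>i\<close>, one of the three given face points, or the interior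
  solution of \<open>M w = (1, 1, 1)\<close>. By the Euler identity \<open>Dp(v) v = 2 c v\<close>, the Poincare
  transform at \<open>v\<close> has the eigenvalues \<open>-c, c n\<^sub>2, c n\<^sub>3\<close>, where \<open>2, 1 + n\<^sub>2, 1 + n\<^sub>3\<close> are
  the eigenvalues of \<open>Dp(w)\<close>. At the vertices and face points \<open>n\<^sub>2, n\<^sub>3\<close> are explicit
  rational functions of the parameters, at the interior point they are the roots of a
  quadratic with such coefficients. Algebraic independence turns a rational relation
  among \<open>-1, n\<^sub>2, n\<^sub>3\<close> into a polynomial identity in the parameters, which is refuted by
  evaluation at a few integer points; so the eigenvalues are even linearly independent
  over \<open>\<rat>\<close>.
\<close>

section \<open>Rational polynomial functions and algebraic independence\<close>

inductive_set rat_polyfun :: "nat \<Rightarrow> ((nat \<Rightarrow> complex) \<Rightarrow> complex) set" for n :: nat where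
  const: "(\<lambda>x. of_rat r) \<in> rat_polyfun n"
| var: "i < n \<Longrightarrow> (\<lambda>x. x i) \<in> rat_polyfun n"
| add: "f \<in> rat_polyfun n \<Longrightarrow> g \<in> rat_polyfun n \<Longrightarrow> (\<lambda>x. f x + g x) \<in> rat_polyfun n"
| mult: "f \<in> rat_polyfun n \<Longrightarrow> g \<in> rat_polyfun n \<Longrightarrow> (\<lambda>x. f x * g x) \<in> rat_polyfun n"

(* A rational polynomial in x 0, ..., x (n - 1) is encoded as a list of terms
   (coefficient, exponent vector); an exponent vector may occur repeatedly, and
   coeff_terms collects its total coefficient. *)
definition monomial :: "nat \<Rightarrow> (nat \<Rightarrow> nat) \<Rightarrow> (nat \<Rightarrow> complex) \<Rightarrow> complex" where
  "monomial n \<alpha> x = (\<Prod>i<n. x i ^ \<alpha> i)"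

definition eval_terms :: "nat \<Rightarrow> (rat \<times> (nat \<Rightarrow> nat)) list \<Rightarrow> (nat \<Rightarrow> complex) \<Rightarrow> complex" where
  "eval_terms n ts x = (\<Sum>(c, \<alpha>)\<leftarrow>ts. of_rat c * monomial n \<alpha> x)"

definition coeff_terms :: "(rat \<times> (nat \<Rightarrow> nat)) list \<Rightarrow> (nat \<Rightarrow> nat) \<Rightarrow> rat" where
  "coeff_terms ts \<alpha> = (\<Sum>(c, \<beta>)\<leftarrow>ts. if \<beta> = \<alpha> then c else 0)"

lemma eval_terms_collect:
  "eval_terms n ts x = (\<Sum>\<alpha>\<in>snd ` set ts. of_rat (coeff_terms ts \<alpha>) * monomial n \<alpha> x)"
proof (induction ts)
  case Nil
  then show ?case by (simp add: eval_terms_def)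
next
  case (Cons t ts)
  obtain c \<beta> where t: "t = (c, \<beta>)" by fastforce
  let ?S = "snd ` set ts"
  let ?g = "\<lambda>\<alpha>. of_rat (coeff_terms ts \<alpha>) * monomial n \<alpha> x"
  have coeff_not_in: "coeff_terms ts \<alpha> = 0" if "\<alpha> \<notin> ?S" for \<alpha>
    using that unfolding coeff_terms_def by (induction ts) auto
  have "(\<Sum>\<alpha>\<in>insert \<beta> ?S. of_rat (coeff_terms (t # ts) \<alpha>) * monomial n \<alpha> x)
      = (\<Sum>\<alpha>\<in>insert \<beta> ?S. (if \<beta> = \<alpha> then of_rat c * monomial n \<alpha> x else 0) + ?g \<alpha>)"
    by (intro sum.cong) (auto simp: t coeff_terms_def of_rat_add distrib_right)
  also have "\<dots> = of_rat c * monomial n \<beta> x + (\<Sum>\<alpha>\<in>insert \<beta> ?S. ?g \<alpha>)"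
    by (simp add: sum.distrib)
  also have "(\<Sum>\<alpha>\<in>insert \<beta> ?S. ?g \<alpha>) = (\<Sum>\<alpha>\<in>?S. ?g \<alpha>)"
    by (cases "\<beta> \<in> ?S") (simp_all add: insert_absorb coeff_not_in)
  finally show ?case
    using Cons by (simp add: t eval_terms_def)
qed

lemma rat_polyfun_eval_terms:
  assumes "f \<in> rat_polyfun n"
  obtains ts where "f = eval_terms n ts"
proof -
  have "\<exists>ts. f = eval_terms n ts"
    using assms
  proof induction
    case (const r)
    show ?case
      by (intro exI[of _ "[(r, \<lambda>_. 0)]"]) (simp add: fun_eq_iff eval_terms_def monomial_def)
  next
    case (var i)
    have "monomial n (\<lambda>j. if j = i then 1 else 0) x = x i" for x
      using var by (simp add: monomial_def power_0_left if_distrib[of "power _"] prod.delta cong: if_cong)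
    then show ?case
      by (intro exI[of _ "[(1, \<lambda>j. if j = i then 1 else 0)]"]) (simp add: fun_eq_iff eval_terms_def)
  next
    case (add f g)
    then obtain ts us where "f = eval_terms n ts" "g = eval_terms n us"
      by blast
    then show ?case
      by (intro exI[of _ "ts @ us"]) (simp add: fun_eq_iff eval_terms_def)
  next
    case (mult f g)
    then obtain ts us where ts: "f = eval_terms n ts" and us: "g = eval_terms n us"
      by blast
    have monomial_add: "monomial n (\<lambda>i. \<alpha> i + \<beta> i) x = monomial n \<alpha> x * monomial n \<beta> x" for \<alpha> \<beta> x
      by (simp add: monomial_def power_add prod.distrib)
    have row: "(\<Sum>u\<leftarrow>us. of_rat (c * fst u) * monomial n (\<lambda>i. \<alpha> i + snd u i) x)
        = of_rat c * monomial n \<alpha> x * eval_terms n us x" for c \<alpha> x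
      by (induction us) (auto simp: eval_terms_def monomial_add of_rat_mult algebra_simps)
    define vs where "vs = [(c * d, \<lambda>i. \<alpha> i + \<beta> i). (c, \<alpha>) \<leftarrow> ts, (d, \<beta>) \<leftarrow> us]"
    have "eval_terms n vs x = eval_terms n ts x * eval_terms n us x" for x
      unfolding vs_def
      by (induction ts) (auto simp: eval_terms_def row[unfolded eval_terms_def] o_def
          case_prod_beta algebra_simps)
    then show ?case
      by (intro exI[of _ vs]) (simp add: ts us fun_eq_iff)
  qed
  then show ?thesis
    using that by blast
qed

lemma alg_indep_rat_polyfun_eq_0:
  assumes "alg_indep n z" "f \<in> rat_polyfun n" "f z = 0"
  shows "f x = 0"
proof -
  obtain ts where f: "f = eval_terms n ts"
    using rat_polyfun_eval_terms[OF assms(2)] by blast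
  \<comment> \<open>exponents beyond \<open>n\<close> do not affect \<open>monomial n\<close>; truncating them puts the terms
    into the form required by \<open>alg_indep\<close>\<close>
  define trunc where "trunc \<alpha> i = (if i < n then \<alpha> i else 0)" for \<alpha> :: "nat \<Rightarrow> nat" and i
  define ts' where "ts' = [(c, trunc \<alpha>). (c, \<alpha>) \<leftarrow> ts]"
  have "monomial n (trunc \<alpha>) = monomial n \<alpha>" for \<alpha>
    by (simp add: fun_eq_iff monomial_def trunc_def)
  then have "eval_terms n ts' x = eval_terms n ts x" for x
    unfolding ts'_def by (induction ts) (auto simp: eval_terms_def)
  then have f': "f = eval_terms n ts'"
    by (simp add: f fun_eq_iff)
  have "\<forall>\<alpha>\<in>snd ` set ts'. coeff_terms ts' \<alpha> = 0"
    using assms(1) assms(3) unfolding alg_indep_def f' eval_terms_collect monomial_def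
    by (elim allE[of _ "snd ` set ts'"] allE[of _ "coeff_terms ts'"]) (auto simp: ts'_def trunc_def)
  then show ?thesis
    by (auto simp: f' eval_terms_collect intro!: sum.neutral)
qed

lemma alg_indep_rat_polyfun_neq_0:
  assumes "alg_indep n z" "f \<in> rat_polyfun n" "f x \<noteq> 0"
  shows "f z \<noteq> 0"
  using alg_indep_rat_polyfun_eq_0[OF assms(1,2)] assms(3) by blast

lemma rat_polyfun_minus: "f \<in> rat_polyfun n \<Longrightarrow> (\<lambda>x. - f x) \<in> rat_polyfun n"
  using rat_polyfun.mult[OF rat_polyfun.const[where r = "-1"]] by simp

lemma rat_polyfun_diff:
  "f \<in> rat_polyfun n \<Longrightarrow> g \<in> rat_polyfun n \<Longrightarrow> (\<lambda>x. f x - g x) \<in> rat_polyfun n"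
  using rat_polyfun.add[OF _ rat_polyfun_minus, of f n g] by simp

lemma rat_polyfun_one: "(\<lambda>x. 1) \<in> rat_polyfun n"
  using rat_polyfun.const[where r = 1] by simp

lemma rat_polyfun_power: "f \<in> rat_polyfun n \<Longrightarrow> (\<lambda>x. f x ^ k) \<in> rat_polyfun n"
  using rat_polyfun_one by (induction k) (auto intro: rat_polyfun.mult)

lemma rat_polyfun_sum:
  "(\<And>i. i \<in> I \<Longrightarrow> f i \<in> rat_polyfun n) \<Longrightarrow> (\<lambda>x. \<Sum>i\<in>I. f i x) \<in> rat_polyfun n"
  using rat_polyfun.const[where r = 0]
  by (induction I rule: infinite_finite_induct) (auto intro: rat_polyfun.add)

lemmas rat_polyfun_intros = rat_polyfun.intros rat_polyfun_minus rat_polyfun_diff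
  rat_polyfun_one rat_polyfun_power

lemma Q_indep_iff:
  "Q_indep l \<longleftrightarrow> (\<forall>q. (\<Sum>i<length l. of_rat (q i) * l ! i) = 0 \<longrightarrow> (\<forall>i<length l. q i = 0))"
proof
  assume indep: "Q_indep l"
  show "\<forall>q. (\<Sum>i<length l. of_rat (q i) * l ! i) = 0 \<longrightarrow> (\<forall>i<length l. q i = 0)"
  proof (rule allI, rule impI)
    fix q :: "nat \<Rightarrow> rat"
    assume "(\<Sum>i<length l. of_rat (q i) * l ! i) = 0"
    moreover have "(\<Sum>i<length l. of_rat (map q [0..<length l] ! i) * l ! i)
        = (\<Sum>i<length l. of_rat (q i) * l ! i)"
      by (intro sum.cong) auto
    ultimately show "\<forall>i<length l. q i = 0"
      using indep unfolding Q_indep_def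
      by (elim allE[of _ "map q [0..<length l]"]) auto
  qed
next
  assume "\<forall>q. (\<Sum>i<length l. of_rat (q i) * l ! i) = 0 \<longrightarrow> (\<forall>i<length l. q i = 0)"
  then show "Q_indep l"
    unfolding Q_indep_def by (auto elim!: allE[of _ "nth _"])
qed

lemma Q_indep_map_mult:
  assumes "k \<noteq> 0" "Q_indep l"
  shows "Q_indep (map ((*) k) l)"
  using assms unfolding Q_indep_iff
  by (simp add: mult.left_commute[of _ k] flip: sum_distrib_left)

lemma Q_indep_mset_eq:
  assumes "mset l' = mset l" "Q_indep l"
  shows "Q_indep l'"
proof -
  obtain \<pi> where \<pi>: "\<pi> permutes {..<length l}" and l': "permute_list \<pi> l = l'"
    by (rule mset_eq_permutation[OF assms(1)])
  show ?thesis
    unfolding Q_indep_iff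
  proof (rule allI, rule impI)
    fix q :: "nat \<Rightarrow> rat"
    assume rel: "(\<Sum>i<length l'. of_rat (q i) * l' ! i) = 0"
    have "(\<Sum>j<length l. of_rat (q (inv \<pi> j)) * l ! j) = (\<Sum>i<length l. of_rat (q i) * l ! \<pi> i)"
      using sum.permute[OF \<pi>, of "\<lambda>j. of_rat (q (inv \<pi> j)) * l ! j"] permutes_inverses(2)[OF \<pi>]
      by (simp add: comp_def)
    also have "\<dots> = 0"
      using rel by (simp flip: l' add: permute_list_nth[OF \<pi>[folded length_permute_list]])
    finally have zero: "\<forall>j<length l. q (inv \<pi> j) = 0"
      using assms(2) unfolding Q_indep_iff by (elim allE[of _ "\<lambda>j. q (inv \<pi> j)"]) simp
    show "\<forall>i<length l'. q i = 0"
    proof (intro allI impI)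
      fix i
      assume "i < length l'"
      then have "\<pi> i < length l"
        using mset_eq_length[OF assms(1)] permutes_in_image[OF \<pi>] by simp
      then have "q (inv \<pi> (\<pi> i)) = 0"
        using zero by blast
      then show "q i = 0"
        by (simp add: permutes_inverses(2)[OF \<pi>])
    qed
  qed
qed

lemma Q_indep_map_eval_alg_indep:
  assumes "alg_indep n z" "set fs \<subseteq> rat_polyfun n"
    and fun_indep: "\<And>q. (\<And>x. (\<Sum>i<length fs. of_rat (q i) * (fs ! i) x) = 0) \<Longrightarrow> \<forall>i<length fs. q i = 0"
  shows "Q_indep (map (\<lambda>f. f z) fs)"
  unfolding Q_indep_iff
proof (rule allI, rule impI)
  fix q :: "nat \<Rightarrow> rat"
  assume rel: "(\<Sum>i<length (map (\<lambda>f. f z) fs). of_rat (q i) * map (\<lambda>f. f z) fs ! i) = 0"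
  let ?g = "\<lambda>x. \<Sum>i<length fs. of_rat (q i) * (fs ! i) x"
  have "?g \<in> rat_polyfun n"
    using assms(2) by (intro rat_polyfun_sum rat_polyfun.mult rat_polyfun.const) auto
  moreover have "?g z = 0"
    using rel by simp
  ultimately have "?g x = 0" for x
    using alg_indep_rat_polyfun_eq_0[OF assms(1)] by blast
  then show "\<forall>i<length (map (\<lambda>f. f z) fs). q i = 0"
    using fun_indep by simp
qed

lemma Q_indep_quadratic_roots:
  assumes indep: "Q_indep [1, s, s^2, r]" and sum_eq: "n2 + n3 = s" and prod_eq: "n2 * n3 = r"
  shows "Q_indep [-1, n2, n3]"
  unfolding Q_indep_iff
proof (rule allI, rule impI)
  fix q :: "nat \<Rightarrow> rat"
  have indep4: "a0 = 0 \<and> a1 = 0 \<and> a3 = 0"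
    if "of_rat a0 + of_rat a1 * s + of_rat a2 * s^2 + of_rat a3 * r = 0" for a0 a1 a2 a3
    using indep that unfolding Q_indep_iff
    by (elim allE[of _ "nth [a0, a1, a2, a3]"]) (auto simp: eval_nat_numeral less_Suc_eq)
  assume "(\<Sum>i<length [-1, n2, n3]. of_rat (q i) * [-1, n2, n3] ! i) = 0"
  then have rel: "of_rat (q 1) * n2 + of_rat (q 2) * n3 = of_rat (q 0)"
    by (simp add: eval_nat_numeral algebra_simps)
  have "q 0 = 0 \<and> q 1 = 0 \<and> q 2 = 0"
  proof (cases "q 1 = q 2")
    case True
    then have "of_rat (- q 0) + of_rat (q 1) * s + of_rat 0 * s^2 + of_rat 0 * r = 0"
      using rel True by (simp add: of_rat_minus distrib_left flip: sum_eq)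
    from indep4[OF this] show ?thesis
      using True by simp
  next
    case False
    \<comment> \<open>then \<open>n2 \<in> \<rat> + \<rat> s\<close>, hence \<open>r = n2 (s - n2) \<in> \<rat> + \<rat> s + \<rat> s\<^sup>2\<close>\<close>
    define \<alpha> where "\<alpha> = q 0 / (q 1 - q 2)"
    define \<beta> where "\<beta> = - q 2 / (q 1 - q 2)"
    have n3: "n3 = s - n2"
      using sum_eq by (simp add: eq_diff_eq add.commute)
    have "(of_rat (q 1) - of_rat (q 2)) * n2 = of_rat (q 0) - of_rat (q 2) * s"
      using rel unfolding n3 by (simp add: algebra_simps)
    moreover have "(of_rat (q 1) - of_rat (q 2) :: complex) \<noteq> 0"
      using False by simp
    ultimately have "n2 = (of_rat (q 0) - of_rat (q 2) * s) / (of_rat (q 1) - of_rat (q 2))"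
      by (simp add: eq_divide_eq mult.commute)
    also have "\<dots> = of_rat \<alpha> + of_rat \<beta> * s"
      by (simp add: \<alpha>_def \<beta>_def of_rat_divide of_rat_diff of_rat_minus diff_divide_distrib)
    finally have n2: "n2 = of_rat \<alpha> + of_rat \<beta> * s" .
    have "of_rat (- (\<alpha> * \<alpha>)) + of_rat (\<alpha> * (1 - 2 * \<beta>)) * s + of_rat (\<beta> * (1 - \<beta>)) * s^2
        + of_rat (-1) * r = 0"
      unfolding prod_eq[symmetric] n3 n2
      by (simp add: of_rat_mult of_rat_diff of_rat_minus of_rat_power algebra_simps power2_eq_square)
    then show ?thesis
      using indep4 by fastforce
  qed
  then show "\<forall>i<length [-1, n2, n3]. q i = 0"
    by (auto simp: less_Suc_eq eval_nat_numeral)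
qed

lemma quadratic_roots_exist: "\<exists>x y :: complex. x + y = s \<and> x * y = p"
proof (intro exI conjI)
  let ?r = "csqrt (s^2 - 4 * p)"
  show "(s + ?r) / 2 + (s - ?r) / 2 = s"
    by (simp add: field_simps)
  show "(s + ?r) / 2 * ((s - ?r) / 2) = p"
    by (simp add: field_simps power2_eq_square[symmetric])
qed

lemma mset_eq_if_linear_factors_eq:
  fixes xs ys :: "'a :: {idom, ring_char_0} list"
  assumes "\<And>t. t \<noteq> c \<Longrightarrow> (\<Prod>x\<leftarrow>xs. t - x) = (\<Prod>y\<leftarrow>ys. t - y)"
  shows "mset xs = mset ys"
proof -
  define P where "P zs = (\<Prod>z\<leftarrow>zs. [:- z, 1:])" for zs :: "'a list"
  have poly_P: "poly (P zs) t = (\<Prod>z\<leftarrow>zs. t - z)" for zs t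
    by (induction zs) (simp_all add: P_def algebra_simps)
  have P_nonzero: "P zs \<noteq> 0" for zs
    unfolding P_def prod_list_zero_iff by (simp add: image_iff)
  have proots_P: "proots (P zs) = mset zs" for zs
  proof (induction zs)
    case (Cons z zs)
    have "P (z # zs) = [:- z, 1:] * P zs"
      by (simp only: P_def list.map prod_list.Cons)
    then have "proots (P (z # zs)) = proots [:- z, 1:] + proots (P zs)"
      by (simp only:) (rule proots_mult, simp_all add: P_nonzero)
    also have "proots [:- z, 1:] = {#z#}"
      using proots_linear_factor[of "- z"] by simp
    finally show ?case
      using Cons by simp
  qed (simp add: P_def)
  have roots: "poly (P xs - P ys) t = 0" if "t \<noteq> c" for t
    using assms[OF that] by (simp add: poly_P)
  have "P xs = P ys"
  proof (rule ccontr)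
    assume "P xs \<noteq> P ys"
    then have "P xs - P ys \<noteq> 0"
      by simp
    then have "finite {t. poly (P xs - P ys) t = 0}"
      by (rule poly_roots_finite)
    moreover have "UNIV - {c} \<subseteq> {t. poly (P xs - P ys) t = 0}"
      using roots by blast
    ultimately have "finite (UNIV - {c})"
      by (rule finite_subset[rotated])
    then show False
      using infinite_UNIV_char_0[where 'a = 'a] by simp
  qed
  then show ?thesis
    using proots_P[of xs] proots_P[of ys] by simp
qed

lemma quadratic_form_axis:
  fixes c :: "3 \<Rightarrow> 3 \<Rightarrow> complex"
  shows "(\<Sum>l\<in>UNIV. \<Sum>m\<in>UNIV. c l m * e j $ l * e j $ m) = c j j"
  using exhaust_3[of j] by (auto simp: sum_3 e_def axis_def)

lemma quadratic_form_pair: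
  fixes c :: "3 \<Rightarrow> 3 \<Rightarrow> complex"
  assumes "j \<noteq> k"
  shows "(\<Sum>l\<in>UNIV. \<Sum>m\<in>UNIV. c l m * (a *s e j + b *s e k) $ l * (a *s e j + b *s e k) $ m)
    = a^2 * c j j + b^2 * c k k + a * b * (c j k + c k j)"
  using exhaust_3[of j] exhaust_3[of k] assms
  by (auto simp: sum_3 e_def axis_def algebra_simps power2_eq_square)

lemma hom_quadratic_eqI:
  assumes p: "hom_quadratic p" and q: "hom_quadratic q"
    and axes: "\<And>i. p (e i) = q (e i)"
    and pairs: "\<And>i j. i \<noteq> j \<Longrightarrow> \<exists>a b. a \<noteq> 0 \<and> b \<noteq> 0 \<and> p (a *s e i + b *s e j) = q (a *s e i + b *s e j)"
  shows "p = q"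
proof
  fix x
  obtain cp :: "3 \<Rightarrow> 3 \<Rightarrow> 3 \<Rightarrow> complex"
    where cp: "\<And>x i. p x $ i = (\<Sum>j\<in>UNIV. \<Sum>k\<in>UNIV. cp i j k * x $ j * x $ k)"
    using p unfolding hom_quadratic_def by blast
  obtain cq :: "3 \<Rightarrow> 3 \<Rightarrow> 3 \<Rightarrow> complex"
    where cq: "\<And>x i. q x $ i = (\<Sum>j\<in>UNIV. \<Sum>k\<in>UNIV. cq i j k * x $ j * x $ k)"
    using q unfolding hom_quadratic_def by blast
  define c where "c i j k = cp i j k - cq i j k" for i j k
  have diff: "p x $ i - q x $ i = (\<Sum>j\<in>UNIV. \<Sum>k\<in>UNIV. c i j k * x $ j * x $ k)" for x i
    unfolding cp cq c_def by (simp add: left_diff_distrib sum_subtractf)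
  have diag: "c i j j = 0" for i j
    using diff[of "e j" i] axes[of j] by (simp add: quadratic_form_axis)
  have symm: "c i j k + c i k j = 0" for i j k
  proof (cases "j = k")
    case True
    then show ?thesis
      using diag by simp
  next
    case False
    obtain a b where ab: "a \<noteq> 0" "b \<noteq> 0" "p (a *s e j + b *s e k) = q (a *s e j + b *s e k)"
      using pairs[OF False] by blast
    have "a * b * (c i j k + c i k j) = 0"
      using diff[of "a *s e j + b *s e k" i] ab(3) quadratic_form_pair[OF False, of "c i" a b]
      by (simp add: diag)
    then show ?thesis
      using ab by simp
  qed
  have "2 * (p x $ i - q x $ i) = (\<Sum>j\<in>UNIV. \<Sum>k\<in>UNIV. (c i j k + c i k j) * x $ j * x $ k)" for i
  proof -
    have "(\<Sum>j\<in>UNIV. \<Sum>k\<in>UNIV. c i k j * x $ j * x $ k) = (\<Sum>j\<in>UNIV. \<Sum>k\<in>UNIV. c i j k * x $ j * x $ k)"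
      by (subst sum.swap) (simp add: mult_ac)
    then show ?thesis
      by (simp add: diff distrib_right sum.distrib)
  qed
  then show "p x = q x"
    by (simp add: vec_eq_iff symm)
qed

section \<open>Homogeneous Lotka--Volterra fields\<close>

definition lotka_volterra :: "complex^'n^'n \<Rightarrow> complex^'n \<Rightarrow> complex^'n" where
  "lotka_volterra M x = (\<chi> i. x$i * (M *v x)$i)"

definition lv_jacobian :: "complex^'n^'n \<Rightarrow> complex^'n \<Rightarrow> complex^'n^'n" where
  "lv_jacobian M x = (\<chi> i j. (if i = j then (M *v x)$i else 0) + x$i * M$i$j)"

lemma lv_jacobian_mult:
  "(lv_jacobian M x *v h)$i = (M *v x)$i * h$i + x$i * (M *v h)$i"
  by (simp add: lv_jacobian_def matrix_vector_mult_def sum.distrib distrib_right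
      sum_distrib_left mult.assoc if_distrib[of "\<lambda>a. a * _"] cong: if_cong)

lemma lv_jacobian_euler: "lv_jacobian M x *v x = 2 *s lotka_volterra M x"
  by (simp add: vec_eq_iff lv_jacobian_mult lotka_volterra_def)

lemma lotka_volterra_scale: "lotka_volterra M (a *s x) = a^2 *s lotka_volterra M x"
  by (simp add: vec_eq_iff lotka_volterra_def matrix_vector_mult_def sum_distrib_left
      power2_eq_square mult_ac)

lemma lv_jacobian_scale: "lv_jacobian M (a *s x) = (\<chi> i j. a * lv_jacobian M x $ i $ j)"
  by (simp add: vec_eq_iff lv_jacobian_def matrix_vector_mult_def sum_distrib_left
      algebra_simps)

lemma has_derivative_vecI:
  fixes f :: "'a::real_normed_vector \<Rightarrow> complex^'n"
  assumes "\<And>i. ((\<lambda>y. f y $ i) has_derivative (\<lambda>h. f' h $ i)) (at x)"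
  shows "(f has_derivative f') (at x)"
proof -
  have "((\<lambda>y. f y \<bullet> b) has_derivative (\<lambda>h. f' h \<bullet> b)) (at x)" if "b \<in> Basis" for b
  proof -
    from that obtain i u where b: "b = axis i u" and "u \<in> Basis"
      unfolding Basis_vec_def by auto
    have "((\<lambda>y. f y $ i \<bullet> u) has_derivative (\<lambda>h. f' h $ i \<bullet> u)) (at x)"
      by (rule bounded_linear.has_derivative[OF bounded_linear_inner_left assms])
    then show ?thesis
      by (simp add: b inner_axis)
  qed
  then show ?thesis
    using has_derivative_componentwise_within[of f f' x UNIV] by simp
qed

lemma has_derivative_vec_nth: "((\<lambda>y. y $ i) has_derivative (\<lambda>h. h $ i)) F"
  by (rule bounded_linear_imp_has_derivative) (rule bounded_linear_vec_nth)

lemma lotka_volterra_has_derivative: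
  "(lotka_volterra M has_derivative (\<lambda>h. lv_jacobian M x *v h)) (at x)"
proof (rule has_derivative_vecI)
  fix i
  have "((\<lambda>y. (M *v y) $ i) has_derivative (\<lambda>h. (M *v h) $ i)) (at x)"
    by (rule bounded_linear_imp_has_derivative)
      (rule bounded_linear_compose[OF bounded_linear_vec_nth matrix_vector_mul_bounded_linear])
  from has_derivative_mult[OF has_derivative_vec_nth this]
  show "((\<lambda>y. lotka_volterra M y $ i) has_derivative (\<lambda>h. (lv_jacobian M x *v h) $ i)) (at x)"
    by (simp add: lotka_volterra_def lv_jacobian_mult algebra_simps)
qed

lemma lotka_volterra_hom_quadratic: "hom_quadratic (lotka_volterra M)"
  unfolding hom_quadratic_def
proof (intro exI allI)
  fix x :: cvec and i
  have "(\<Sum>j\<in>UNIV. \<Sum>k\<in>UNIV. (if j = i then M$i$k else 0) * x$j * x$k)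
      = (\<Sum>j\<in>UNIV. if j = i then \<Sum>k\<in>UNIV. M$i$k * x$i * x$k else 0)"
    by (intro sum.cong) auto
  then show "lotka_volterra M x $ i
      = (\<Sum>j\<in>UNIV. \<Sum>k\<in>UNIV. (if j = i then M$i$k else 0) * x$j * x$k)"
    by (simp add: lotka_volterra_def matrix_vector_mult_def sum_distrib_left mult_ac)
qed

lemma lotka_volterra_axis:
  assumes "M$i$i = 1"
  shows "lotka_volterra M (e i) = e i"
  using assms by (simp add: vec_eq_iff lotka_volterra_def e_def matrix_vector_mult_def axis_def
      if_distrib[of "\<lambda>a. _ * a"] cong: if_cong)

lemma lotka_volterra_semi_invariant: "semi_invariant (lotka_volterra M) (\<lambda>x. x $ i)"
proof -
  have cofactor: "(\<lambda>x. (M *v x) $ i) \<in> polyfun"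
    unfolding matrix_vector_mult_def sum_3 vec_lambda_beta by (intro polyfun.intros)
  have "frechet_derivative (\<lambda>y. y $ i) (at x) = (\<lambda>h. h $ i)" for x :: cvec
    by (rule frechet_derivative_at[OF has_derivative_vec_nth, symmetric])
  then show ?thesis
    unfolding semi_invariant_def
  proof (intro conjI polyfun.coord bexI[OF _ cofactor])
    show "\<exists>x y :: cvec. x $ i \<noteq> y $ i"
      by (intro exI[of _ 0] exI[of _ "axis i 1"]) simp
  qed (simp add: lie_deriv_def lotka_volterra_def)
qed

lemma lotka_volterra_fixed_pointD:
  assumes "lotka_volterra M w = w"
  shows "w$i = 0 \<or> (M *v w)$i = 1"
proof -
  have "w$i * (M *v w)$i = w$i"
    using arg_cong[OF assms, of "\<lambda>u. u$i"] by (simp add: lotka_volterra_def)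
  then have "w$i * ((M *v w)$i - 1) = 0"
    by (simp add: algebra_simps)
  then show ?thesis
    by simp
qed

lemma matrix_vector_mult_3:
  fixes M :: "'a::semiring_1^3^3"
  shows "(M *v w)$i = M$i$1 * w$1 + M$i$2 * w$2 + M$i$3 * w$3"
  by (simp add: matrix_vector_mult_def sum_3)

lemma pair_system_eq_0:
  fixes x y a b :: complex
  assumes "x + a * y = 0" "b * x + y = 0" "a * b \<noteq> 1"
  shows "x = 0"
proof -
  have "x * (1 - a * b) = (x + a * y) - a * (b * x + y)"
    by (simp add: algebra_simps)
  with assms show ?thesis
    by simp
qed

lemma lotka_volterra_eq_0D:
  fixes M :: "complex^3^3"
  assumes diag: "\<And>i. M$i$i = 1" and minors2: "\<And>i j. i \<noteq> j \<Longrightarrow> M$i$j * M$j$i \<noteq> 1"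
    and "det M \<noteq> 0" and zero: "lotka_volterra M v = 0"
  shows "v = 0"
proof -
  have Mv: "v$i = 0 \<or> (M *v v)$i = 0" for i
    using zero by (simp add: vec_eq_iff lotka_volterra_def)
  have "v$1 = 0 \<and> v$2 = 0 \<and> v$3 = 0"
  proof (cases "v$1 = 0"; cases "v$2 = 0"; cases "v$3 = 0")
    assume "v$1 \<noteq> 0" "v$2 \<noteq> 0" "v$3 \<noteq> 0"
    then have "M *v v = 0"
      using Mv[of 1] Mv[of 2] Mv[of 3] by (simp add: vec_eq_iff forall_3)
    moreover have "inj ((*v) M)"
      using \<open>det M \<noteq> 0\<close> by (simp add: inj_matrix_vector_mult invertible_det_nz)
    ultimately have "v = 0"
      using injD[of "(*v) M" v 0] by simp
    then show ?thesis
      by simp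
  next
    assume nz: "v$1 \<noteq> 0" "v$2 \<noteq> 0" "v$3 = 0"
    then have "v$1 + M$1$2 * v$2 = 0" "M$2$1 * v$1 + v$2 = 0"
      using Mv[of 1] Mv[of 2] by (simp_all add: matrix_vector_mult_3 diag)
    from pair_system_eq_0[OF this minors2[of 1 2]] show ?thesis
      using nz by simp
  next
    assume nz: "v$1 = 0" "v$2 \<noteq> 0" "v$3 \<noteq> 0"
    then have "v$2 + M$2$3 * v$3 = 0" "M$3$2 * v$2 + v$3 = 0"
      using Mv[of 2] Mv[of 3] by (simp_all add: matrix_vector_mult_3 diag)
    from pair_system_eq_0[OF this minors2[of 2 3]] show ?thesis
      using nz by simp
  next
    assume nz: "v$1 \<noteq> 0" "v$2 = 0" "v$3 \<noteq> 0"
    then have "v$1 + M$1$3 * v$3 = 0" "M$3$1 * v$1 + v$3 = 0"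
      using Mv[of 1] Mv[of 3] by (simp_all add: matrix_vector_mult_3 diag)
    from pair_system_eq_0[OF this minors2[of 1 3]] show ?thesis
      using nz by simp
  qed (use Mv[of 1] Mv[of 2] Mv[of 3] in \<open>auto simp: matrix_vector_mult_3 diag\<close>)
  then show ?thesis
    by (simp add: vec_eq_iff forall_3)
qed

lemma lv_jacobian_axis:
  "lv_jacobian M (e k) $ i $ j = (if i = j then M$i$k else 0) + (if i = k then M$i$j else 0)"
  by (simp add: lv_jacobian_def e_def axis_def matrix_vector_mult_def
      if_distrib[of "\<lambda>a. _ * a"] cong: if_cong)

lemma lv_jacobian_charpoly_vertex:
  fixes M :: "complex^3^3"
  assumes "\<And>i. M$i$i = 1"
  shows "det (mat s - lv_jacobian M (e 1)) = (s - 2) * (s - M$2$1) * (s - M$3$1)"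
    and "det (mat s - lv_jacobian M (e 2)) = (s - 2) * (s - M$1$2) * (s - M$3$2)"
    and "det (mat s - lv_jacobian M (e 3)) = (s - 2) * (s - M$1$3) * (s - M$2$3)"
  using assms by (simp_all add: det_3 mat_def lv_jacobian_axis algebra_simps)

lemma mat_minus_lv_jacobian:
  "mat s - lv_jacobian M w = (\<chi> i j. (if i = j then s - (M *v w)$i else 0) - w$i * M$i$j)"
  by (simp add: vec_eq_iff mat_def lv_jacobian_def)

lemma lv_jacobian_charpoly_face:
  fixes M :: "complex^3^3"
  assumes "\<And>i. M$i$i = 1" and "w$k = 0" and "\<And>i. i \<noteq> k \<Longrightarrow> (M *v w)$i = 1"
  shows "det (mat s - lv_jacobian M w) = (s - 2) * (s - (w$1 + w$2 + w$3)) * (s - (M *v w)$k)"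
proof -
  consider "k = 1" | "k = 2" | "k = 3"
    using exhaust_3 by blast
  then show ?thesis
  proof cases
    case 1
    have "w$1 = 0"
      using assms(2) 1 by simp
    then show ?thesis
      using assms(3)[of 2] assms(3)[of 3] unfolding 1 mat_minus_lv_jacobian matrix_vector_mult_3
      by (simp add: det_3 assms(1)) algebra
  next
    case 2
    have "w$2 = 0"
      using assms(2) 2 by simp
    then show ?thesis
      using assms(3)[of 1] assms(3)[of 3] unfolding 2 mat_minus_lv_jacobian matrix_vector_mult_3
      by (simp add: det_3 assms(1)) algebra
  next
    case 3
    have "w$3 = 0"
      using assms(2) 3 by simp
    then show ?thesis
      using assms(3)[of 1] assms(3)[of 2] unfolding 3 mat_minus_lv_jacobian matrix_vector_mult_3
      by (simp add: det_3 assms(1)) algebra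
  qed
qed

lemma lv_jacobian_charpoly_interior:
  fixes M :: "complex^3^3"
  assumes "\<And>i. M$i$i = 1" and "\<And>i. (M *v w)$i = 1"
    and "n2 + n3 = w$1 + w$2 + w$3 - 1" and "n2 * n3 = w$1 * w$2 * w$3 * det M"
  shows "det (mat s - lv_jacobian M w) = (s - 2) * (s - 1 - n2) * (s - 1 - n3)"
  using assms(2)[of 1] assms(2)[of 2] assms(2)[of 3] assms(3,4)
  unfolding mat_minus_lv_jacobian matrix_vector_mult_3 by (simp add: det_3 assms(1)) algebra

section \<open>The Poincare transform\<close>

lemma invertible_matrix_inv:
  fixes T :: "'a::semiring_1^'n^'n"
  assumes "invertible T"
  shows "T ** matrix_inv T = mat 1" and "matrix_inv T ** T = mat 1"
proof -
  have "\<exists>T'. T ** T' = mat 1 \<and> T' ** T = mat 1"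
    using assms unfolding invertible_def by blast
  then have "T ** matrix_inv T = mat 1 \<and> matrix_inv T ** T = mat 1"
    unfolding matrix_inv_def by (rule someI_ex)
  then show "T ** matrix_inv T = mat 1" and "matrix_inv T ** T = mat 1"
    by auto
qed

lemma matrix_vector_mult_mat: "mat s *v x = s *s (x :: 'a::comm_ring_1^'n)"
  by (simp add: vec_eq_iff mat_def matrix_vector_mult_def if_distrib[of "\<lambda>a. a * _"] cong: if_cong)

lemma det_mat_minus_conjugate:
  fixes T X :: "'a::field^'n^'n"
  assumes "invertible T"
  shows "det (mat s - T ** X ** matrix_inv T) = det (mat s - X)"
proof -
  let ?T' = "matrix_inv T"
  have conj: "T ** (mat s - X) ** ?T' = mat s - T ** X ** ?T'"
    unfolding matrix_eq
  proof
    fix x :: "'a^'n"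
    have "(T ** (mat s - X) ** ?T') *v x = s *s ((T ** ?T') *v x) - (T ** X ** ?T') *v x"
      by (simp flip: matrix_vector_mul_assoc add: matrix_vector_mult_diff_rdistrib
          matrix_vector_mult_diff_distrib matrix_vector_mult_mat vector_scalar_commute)
    then show "(T ** (mat s - X) ** ?T') *v x = (mat s - T ** X ** ?T') *v x"
      by (simp add: invertible_matrix_inv[OF assms] matrix_vector_mult_diff_rdistrib matrix_vector_mult_mat)
  qed
  have "det T * det ?T' = 1"
    using invertible_matrix_inv[OF assms] det_mul[of T ?T'] by simp
  then show ?thesis
    unfolding conj[symmetric] det_mul by (simp add: algebra_simps)
qed

lemma det_mat_minus_scale:
  fixes A :: "'a::comm_ring_1^'n^'n"
  shows "det (mat (a * s) - (\<chi> i j. a * A $ i $ j)) = a ^ CARD('n) * det (mat s - A)"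
proof -
  have "mat (a * s) - (\<chi> i j. a * A $ i $ j) = (\<chi> i. a *s (mat s - A) $ i)"
    by (simp add: vec_eq_iff mat_def algebra_simps)
  then show ?thesis
    using det_rows_mul[of "\<lambda>_. a" "\<lambda>i. (mat s - A) $ i"] by (simp only: vec_lambda_eta prod_constant)
qed

lemma matrix_inv_mult_vector:
  fixes T :: "'a::field^'n^'n"
  assumes "invertible T" "T *v v = u"
  shows "matrix_inv T *v u = v"
  using invertible_matrix_inv(2)[OF assms(1)] assms(2)
  by (metis matrix_vector_mul_assoc matrix_vector_mul_lid)

lemma poincare_chart_has_derivative:
  fixes T :: "complex^3^3"
  assumes p': "(p has_derivative (\<lambda>h. J *v h)) (at v)" and T: "invertible T" "T *v v = e 1"
  shows "((\<lambda>y. T *v p (matrix_inv T *v vector [1, y$1, y$2])) has_derivative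
    (\<lambda>h. (T ** J ** matrix_inv T) *v vector [0, h$1, h$2])) (at (0 :: cvec))"
proof -
  define \<psi> :: "cvec \<Rightarrow> cvec" where "\<psi> y = vector [1, y$1, y$2]" for y
  define D\<psi> :: "cvec \<Rightarrow> cvec" where "D\<psi> h = vector [0, h$1, h$2]" for h
  have "\<psi> 0 = e 1"
    by (simp add: \<psi>_def e_def vec_eq_iff forall_3 axis_def)
  then have "(p has_derivative (\<lambda>h. J *v h)) (at (matrix_inv T *v \<psi> 0))"
    using p' matrix_inv_mult_vector[OF T] by simp
  moreover have "(\<psi> has_derivative D\<psi>) (at 0)"
  proof (rule has_derivative_vecI)
    fix i :: 3
    show "((\<lambda>y. \<psi> y $ i) has_derivative (\<lambda>h. D\<psi> h $ i)) (at 0)"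
      using exhaust_3[of i] by (auto simp: \<psi>_def D\<psi>_def has_derivative_vec_nth)
  qed
  then have "((\<lambda>y. matrix_inv T *v \<psi> y) has_derivative (\<lambda>h. matrix_inv T *v D\<psi> h)) (at 0)"
    by (rule bounded_linear.has_derivative[OF matrix_vector_mul_bounded_linear])
  ultimately have "((\<lambda>y. p (matrix_inv T *v \<psi> y)) has_derivative (\<lambda>h. J *v (matrix_inv T *v D\<psi> h))) (at 0)"
    using diff_chain_at by (auto simp: o_def)
  from bounded_linear.has_derivative[OF matrix_vector_mul_bounded_linear this, of T]
  show ?thesis
    by (simp add: \<psi>_def D\<psi>_def matrix_vector_mul_assoc matrix_mul_assoc)
qed

lemma poincare_has_derivative:
  fixes T :: "complex^3^3"
  assumes p': "(p has_derivative (\<lambda>h. J *v h)) (at v)"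
    and T: "invertible T" "T *v v = e 1" and pv: "p v = c *s v"
  defines "B \<equiv> T ** J ** matrix_inv T"
  shows "(poincare p T has_derivative
    (\<lambda>h. vector [(B *v vector [0, h$1, h$2])$2 - c * h$1,
                 (B *v vector [0, h$1, h$2])$3 - c * h$2, - c * h$3])) (at 0)"
proof -
  define F where "F y = T *v p (matrix_inv T *v vector [1, y$1, y$2])" for y :: cvec
  have dF: "((\<lambda>y. F y $ k) has_derivative (\<lambda>h. (B *v vector [0, h$1, h$2]) $ k)) (at 0)" for k
    using bounded_linear.has_derivative[OF bounded_linear_vec_nth poincare_chart_has_derivative[OF p' T]]
    by (simp add: F_def B_def)
  have "vector [1, 0, 0] = e 1"
    by (simp add: e_def vec_eq_iff forall_3 axis_def)
  then have "F 0 = c *s e 1"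
    by (simp add: F_def matrix_inv_mult_vector[OF T] pv vector_scalar_commute T(2))
  then have dFy: "((\<lambda>y. F y $ 1 * y $ k) has_derivative (\<lambda>h. c * h $ k)) (at 0)" for k
    by (intro has_derivative_eq_rhs[OF has_derivative_mult[OF dF has_derivative_vec_nth]])
      (simp add: e_def)
  have "poincare p T = (\<lambda>y. vector [F y $ 2 - F y $ 1 * y $ 1, F y $ 3 - F y $ 1 * y $ 2, - (F y $ 1 * y $ 3)])"
    by (simp add: fun_eq_iff poincare_def F_def Let_def mult.commute)
  moreover have "((\<lambda>y. vector [F y $ 2 - F y $ 1 * y $ 1, F y $ 3 - F y $ 1 * y $ 2, - (F y $ 1 * y $ 3)] :: cvec)
    has_derivative (\<lambda>h. vector [(B *v vector [0, h$1, h$2])$2 - c * h$1,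
      (B *v vector [0, h$1, h$2])$3 - c * h$2, - (c * h$3)])) (at 0)"
    apply (rule has_derivative_vecI)
    subgoal for i
      using exhaust_3[of i] has_derivative_diff[OF dF dFy] has_derivative_minus[OF dFy] by auto
    done
  ultimately show ?thesis
    by simp
qed

lemma poincare_charpoly:
  assumes p': "(p has_derivative (\<lambda>h. J *v h)) (at v)" and euler: "J *v v = (2 * c) *s v"
    and T: "invertible T" "T *v v = e 1" and pv: "p v = c *s v"
  shows "(t - c) * det (mat t - matrix (frechet_derivative (poincare p T) (at 0)))
    = (t + c) * det (mat (t + c) - J)"
proof -
  define B where "B = T ** J ** matrix_inv T"
  define L :: "cvec \<Rightarrow> cvec"
    where "L h = vector [(B *v vector [0, h$1, h$2])$2 - c * h$1,
                         (B *v vector [0, h$1, h$2])$3 - c * h$2, - c * h$3]" for h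
  have L: "frechet_derivative (poincare p T) (at 0) = L"
    using frechet_derivative_at[OF poincare_has_derivative[OF p' T pv]]
    by (simp add: L_def[abs_def] B_def)
  have B_mult: "(B *v vector [a, b, d]) $ k = B$k$1 * a + B$k$2 * b + B$k$3 * d" for a b d k
    by (simp add: matrix_vector_mult_def sum_3)
  \<comment> \<open>by the Euler identity the first column of \<open>B\<close> is \<open>2 c e\<^sub>1\<close>, which splits off the factor
    \<open>t - c\<close> of the right-hand side\<close>
  have "B *v e 1 = T *v (J *v v)"
    by (simp add: B_def matrix_inv_mult_vector[OF T] flip: matrix_vector_mul_assoc)
  also have "\<dots> = (2 * c) *s e 1"
    by (simp add: euler vector_scalar_commute T(2))
  finally have "(B *v e 1) $ k = ((2 * c) *s e 1) $ k" for k
    by simp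
  then have B_col1: "B $ k $ 1 = (if k = 1 then 2 * c else 0)" for k
    by (simp add: e_def axis_def matrix_vector_mult_def if_distrib[of "\<lambda>a. _ * a"] cong: if_cong)
  have axes: "axis (1::3) (1::complex) = vector [1, 0, 0]" "axis (2::3) (1::complex) = vector [0, 1, 0]"
    "axis (3::3) (1::complex) = vector [0, 0, 1]"
    by (simp_all add: vec_eq_iff forall_3 axis_def)
  have "(t - c) * det (mat t - matrix L) = (t + c) * det (mat (t + c) - B)"
    by (simp add: matrix_def det_3 mat_def L_def axes B_mult B_col1 algebra_simps)
  also have "det (mat (t + c) - B) = det (mat (t + c) - J)"
    unfolding B_def by (rule det_mat_minus_conjugate[OF T(1)])
  finally show ?thesis
    by (simp add: L)
qed

lemma poincare_lotka_volterra_charpoly: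
  fixes M T :: "complex^3^3"
  assumes pv: "lotka_volterra M v = c *s v" and c: "c \<noteq> 0"
    and T: "invertible T" "T *v v = e 1"
    and charpoly: "\<And>s. det (mat s - lv_jacobian M ((1 / c) *s v)) = (s - 2) * (s - 1 - n2) * (s - 1 - n3)"
    and "t \<noteq> c"
  shows "det (mat t - matrix (frechet_derivative (poincare (lotka_volterra M) T) (at 0)))
    = (t + c) * (t - c * n2) * (t - c * n3)"
proof -
  \<comment> \<open>the Jacobian is linear in the base point, so its spectrum at \<open>v\<close> is \<open>c\<close> times the
    spectrum at the idempotent \<open>v / c\<close>\<close>
  have "lv_jacobian M v = (\<chi> i j. c * lv_jacobian M ((1 / c) *s v) $ i $ j)"
    using lv_jacobian_scale[of M c "(1 / c) *s v"] c by simp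
  then have "det (mat (t + c) - lv_jacobian M v) = c^3 * det (mat ((t + c) / c) - lv_jacobian M ((1 / c) *s v))"
    using det_mat_minus_scale[of c "(t + c) / c" "lv_jacobian M ((1 / c) *s v)"] c by simp
  also have "\<dots> = (t - c) * (t - c * n2) * (t - c * n3)"
    using c by (simp add: charpoly field_simps power3_eq_cube)
  finally show ?thesis
    using poincare_charpoly[OF lotka_volterra_has_derivative _ T pv, of t] \<open>t \<noteq> c\<close>
    by (simp add: lv_jacobian_euler pv mult_ac)
qed

lemma property_E_lotka_volterraI:
  fixes M :: "complex^3^3"
  assumes zeros: "\<And>v. lotka_volterra M v = 0 \<Longrightarrow> v = 0"
    and spectrum: "\<And>w. w \<noteq> 0 \<Longrightarrow> lotka_volterra M w = w \<Longrightarrow>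
      \<exists>n2 n3. Q_indep [-1, n2, n3] \<and>
        (\<forall>s. det (mat s - lv_jacobian M w) = (s - 2) * (s - 1 - n2) * (s - 1 - n3))"
  shows "property_E (lotka_volterra M)"
  unfolding property_E_def
proof (intro allI impI disjI1)
  fix v T l1 l2 l3
  assume "v \<noteq> 0 \<and> (\<exists>c. lotka_volterra M v = c *s v) \<and> invertible T \<and> T *v v = e 1
    \<and> eigenvalues3 (matrix (frechet_derivative (poincare (lotka_volterra M) T) (at 0))) l1 l2 l3"
  then obtain c where v0: "v \<noteq> 0" and pv: "lotka_volterra M v = c *s v"
    and T: "invertible T" "T *v v = e 1"
    and ev: "\<And>t. det (mat t - matrix (frechet_derivative (poincare (lotka_volterra M) T) (at 0)))
      = (t - l1) * (t - l2) * (t - l3)"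
    unfolding eigenvalues3_def by blast
  have c: "c \<noteq> 0"
    using zeros[of v] pv v0 by auto
  have "(1 / c) *s v \<noteq> 0" "lotka_volterra M ((1 / c) *s v) = (1 / c) *s v"
    using v0 pv c by (simp_all add: lotka_volterra_scale power2_eq_square)
  then obtain n2 n3 where indep: "Q_indep [-1, n2, n3]"
    and charpoly: "\<And>s. det (mat s - lv_jacobian M ((1 / c) *s v)) = (s - 2) * (s - 1 - n2) * (s - 1 - n3)"
    using spectrum by blast
  from poincare_lotka_volterra_charpoly[OF pv c T charpoly]
  have "mset [l1, l2, l3] = mset [-c, c * n2, c * n3]"
    by (intro mset_eq_if_linear_factors_eq[of c]) (simp add: ev mult.assoc)
  moreover have "Q_indep [-c, c * n2, c * n3]"
    using Q_indep_map_mult[OF c indep] by simp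
  ultimately show "Q_indep [l1, l2, l3]"
    by (rule Q_indep_mset_eq)
qed

section \<open>The six-parameter family\<close>

(* The given idempotents are v_1 = (A, B, 0), v_2 = (0, C, D), v_3 = (E, 0, F). The
   off-diagonal entries are forced by p v_i = v_i, e.g. A + M_12 B = 1 and M_21 A + B = 1. *)
definition lv_matrix ::
    "complex \<Rightarrow> complex \<Rightarrow> complex \<Rightarrow> complex \<Rightarrow> complex \<Rightarrow> complex \<Rightarrow> complex^3^3" where
  "lv_matrix A B C D E F = vector [vector [1, (1 - A) / B, (1 - E) / F],
                                   vector [(1 - B) / A, 1, (1 - C) / D],
                                   vector [(1 - F) / E, (1 - D) / C, 1]]"

definition det_poly ::
    "complex \<Rightarrow> complex \<Rightarrow> complex \<Rightarrow> complex \<Rightarrow> complex \<Rightarrow> complex \<Rightarrow> complex" where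
  "det_poly A B C D E F = A * B * C * D * E * F
     + (1 - A) * (1 - C) * (1 - F) * A * C * F + (1 - B) * (1 - D) * (1 - E) * B * D * E
     - (1 - A) * (1 - B) * C * D * E * F - (1 - C) * (1 - D) * A * B * E * F
     - (1 - E) * (1 - F) * A * B * C * D"

definition cramer_poly1 ::
    "complex \<Rightarrow> complex \<Rightarrow> complex \<Rightarrow> complex \<Rightarrow> complex \<Rightarrow> complex \<Rightarrow> complex" where
  "cramer_poly1 A B C D E F = (C + D - 1) * (B * F - (1 - A) * C * F - (1 - E) * B * D)"

definition cramer_poly2 ::
    "complex \<Rightarrow> complex \<Rightarrow> complex \<Rightarrow> complex \<Rightarrow> complex \<Rightarrow> complex \<Rightarrow> complex" where
  "cramer_poly2 A B C D E F = (E + F - 1) * (A * D - (1 - B) * D * E - (1 - C) * A * F)"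

definition cramer_poly3 ::
    "complex \<Rightarrow> complex \<Rightarrow> complex \<Rightarrow> complex \<Rightarrow> complex \<Rightarrow> complex \<Rightarrow> complex" where
  "cramer_poly3 A B C D E F = (A + B - 1) * (C * E - (1 - D) * B * E - (1 - F) * A * C)"

lemma lv_matrix_nth [simp]:
  "lv_matrix A B C D E F $ 1 $ 1 = 1" "lv_matrix A B C D E F $ 1 $ 2 = (1 - A) / B"
  "lv_matrix A B C D E F $ 1 $ 3 = (1 - E) / F" "lv_matrix A B C D E F $ 2 $ 1 = (1 - B) / A"
  "lv_matrix A B C D E F $ 2 $ 2 = 1" "lv_matrix A B C D E F $ 2 $ 3 = (1 - C) / D"
  "lv_matrix A B C D E F $ 3 $ 1 = (1 - F) / E" "lv_matrix A B C D E F $ 3 $ 2 = (1 - D) / C"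
  "lv_matrix A B C D E F $ 3 $ 3 = 1"
  by (simp_all add: lv_matrix_def)

lemma lv_matrix_diag: "lv_matrix A B C D E F $ i $ i = 1"
  using exhaust_3[of i] by auto

lemma solve_face_system:
  fixes a b y1 y2 :: complex
  assumes "b * y1 + (1 - a) * y2 = b" "(1 - b) * y1 + a * y2 = a" "a + b \<noteq> 1" "a \<noteq> 0"
  shows "y1 = a" and "y2 = b"
proof -
  have "(a + b - 1) * (y1 - a) = a * (b * y1 + (1 - a) * y2 - b) - (1 - a) * ((1 - b) * y1 + a * y2 - a)"
    by (simp add: algebra_simps)
  with assms(1,2,3) show y1: "y1 = a"
    by simp
  have "a * (y2 - b) = (1 - b) * y1 + a * y2 - a"
    unfolding y1 by (simp add: algebra_simps)
  with assms(2,4) show "y2 = b"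
    by simp
qed

locale lv_family =
  fixes A B C D E F :: complex
  assumes alg_indep: "alg_indep 6 (\<lambda>k. [A, B, C, D, E, F] ! k)"
begin

abbreviation M where "M \<equiv> lv_matrix A B C D E F"

lemma params_nonzero:
  shows "A \<noteq> 0" "B \<noteq> 0" "C \<noteq> 0" "D \<noteq> 0" "E \<noteq> 0" "F \<noteq> 0"
    and "A + B \<noteq> 1" "C + D \<noteq> 1" "E + F \<noteq> 1" "det_poly A B C D E F \<noteq> 0"
proof -
  note neq_0 = alg_indep_rat_polyfun_neq_0[OF alg_indep]
  have var: "(\<lambda>x. x i) \<in> rat_polyfun 6" if "i < 6" for i
    using that by (rule rat_polyfun.var)
  show "A \<noteq> 0" using neq_0[OF var, of 0 "\<lambda>_. 1"] by simp
  show "B \<noteq> 0" using neq_0[OF var, of 1 "\<lambda>_. 1"] by simp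
  show "C \<noteq> 0" using neq_0[OF var, of 2 "\<lambda>_. 1"] by simp
  show "D \<noteq> 0" using neq_0[OF var, of 3 "\<lambda>_. 1"] by simp
  show "E \<noteq> 0" using neq_0[OF var, of 4 "\<lambda>_. 1"] by simp
  show "F \<noteq> 0" using neq_0[OF var, of 5 "\<lambda>_. 1"] by simp
  have sum_var: "(\<lambda>x. x i + x j - 1) \<in> rat_polyfun 6" if "i < 6" "j < 6" for i j
    using that by (intro rat_polyfun_intros)
  show "A + B \<noteq> 1" using neq_0[OF sum_var, of 0 1 "\<lambda>_. 0"] by simp
  show "C + D \<noteq> 1" using neq_0[OF sum_var, of 2 3 "\<lambda>_. 0"] by simp
  show "E + F \<noteq> 1" using neq_0[OF sum_var, of 4 5 "\<lambda>_. 0"] by simp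
  have "(\<lambda>x. det_poly (x 0) (x 1) (x 2) (x 3) (x 4) (x 5)) \<in> rat_polyfun 6"
    unfolding det_poly_def by (intro rat_polyfun_intros) auto
  from neq_0[OF this, of "\<lambda>_. 1"] show "det_poly A B C D E F \<noteq> 0"
    by (simp add: det_poly_def)
qed

lemma det_lv_matrix: "A * B * C * D * E * F * det M = det_poly A B C D E F"
  using params_nonzero(1-6) by (simp add: det_3 det_poly_def field_simps)

lemma lv_matrix_principal_minors: "i \<noteq> j \<Longrightarrow> M$i$j * M$j$i \<noteq> 1"
proof -
  have minor: "(1 - a) / b * ((1 - b) / a) \<noteq> 1" if "a \<noteq> 0" "b \<noteq> 0" "a + b \<noteq> 1" for a b :: complex
  proof
    assume "(1 - a) / b * ((1 - b) / a) = 1"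
    then have "(1 - a) * (1 - b) = a * b"
      using that by (simp add: field_simps)
    then have "a + b = 1"
      by (simp add: algebra_simps)
    with that show False
      by simp
  qed
  assume "i \<noteq> j"
  then show ?thesis
    using exhaust_3[of i] exhaust_3[of j] minor[OF params_nonzero(1,2,7)] minor[OF params_nonzero(3,4,8)]
      minor[OF params_nonzero(5,6,9)]
    by (auto simp: mult.commute)
qed

lemma det_lv_matrix_nonzero: "det M \<noteq> 0"
  using det_lv_matrix params_nonzero(10) by auto

lemma lotka_volterra_face_points:
  shows "lotka_volterra M (vector [A, B, 0]) = vector [A, B, 0]"
    and "lotka_volterra M (vector [0, C, D]) = vector [0, C, D]"
    and "lotka_volterra M (vector [E, 0, F]) = vector [E, 0, F]"
  using params_nonzero(1-6)
  by (simp_all add: vec_eq_iff forall_3 lotka_volterra_def matrix_vector_mult_3 field_simps)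

lemma hom_quadratic_eq_lotka_volterra:
  assumes "hom_quadratic p" "\<And>i. p (e i) = e i"
    and "p (vector [A, B, 0]) = vector [A, B, 0]" "p (vector [0, C, D]) = vector [0, C, D]"
    "p (vector [E, 0, F]) = vector [E, 0, F]"
  shows "p = lotka_volterra M"
proof (rule hom_quadratic_eqI[OF assms(1) lotka_volterra_hom_quadratic])
  show "p (e i) = lotka_volterra M (e i)" for i
    using assms(2) lotka_volterra_axis[OF lv_matrix_diag] by simp
  have face: "p (a *s e i + b *s e j) = lotka_volterra M (a *s e i + b *s e j)"
    if "a *s e i + b *s e j \<in> {vector [A, B, 0], vector [0, C, D], vector [E, 0, F]}" for a b i j
    using that assms(3-5) lotka_volterra_face_points by auto
  have axes: "a *s e i + b *s e j = vector [a * of_bool (i = 1) + b * of_bool (j = 1),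
      a * of_bool (i = 2) + b * of_bool (j = 2), a * of_bool (i = 3) + b * of_bool (j = 3)]" for a b i j
    by (simp add: vec_eq_iff forall_3 e_def axis_def)
  fix i j :: 3
  assume "i \<noteq> j"
  then consider "i = 1" "j = 2" | "i = 2" "j = 1" | "i = 2" "j = 3" | "i = 3" "j = 2"
    | "i = 1" "j = 3" | "i = 3" "j = 1"
    using exhaust_3[of i] exhaust_3[of j] by auto
  then show "\<exists>a b. a \<noteq> 0 \<and> b \<noteq> 0 \<and> p (a *s e i + b *s e j) = lotka_volterra M (a *s e i + b *s e j)"
  proof cases
    case 1
    then show ?thesis using params_nonzero face[of A i B j] by (auto simp: axes)
  next
    case 2
    then show ?thesis using params_nonzero face[of B i A j] by (auto simp: axes)
  next
    case 3
    then show ?thesis using params_nonzero face[of C i D j] by (auto simp: axes)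
  next
    case 4
    then show ?thesis using params_nonzero face[of D i C j] by (auto simp: axes)
  next
    case 5
    then show ?thesis using params_nonzero face[of E i F j] by (auto simp: axes)
  next
    case 6
    then show ?thesis using params_nonzero face[of F i E j] by (auto simp: axes)
  qed
qed

lemma lv_matrix_face_fixed_points:
  shows "w$3 = 0 \<Longrightarrow> (M *v w)$1 = 1 \<Longrightarrow> (M *v w)$2 = 1 \<Longrightarrow> w = vector [A, B, 0]"
    and "w$1 = 0 \<Longrightarrow> (M *v w)$2 = 1 \<Longrightarrow> (M *v w)$3 = 1 \<Longrightarrow> w = vector [0, C, D]"
    and "w$2 = 0 \<Longrightarrow> (M *v w)$1 = 1 \<Longrightarrow> (M *v w)$3 = 1 \<Longrightarrow> w = vector [E, 0, F]"
proof -
  have w: "w = vector [a, b, d] \<longleftrightarrow> w$1 = a \<and> w$2 = b \<and> w$3 = d" for a b d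
    by (auto simp: vec_eq_iff forall_3)
  note Mw = matrix_vector_mult_3[of M w]
  show "w = vector [A, B, 0]" if "w$3 = 0" "(M *v w)$1 = 1" "(M *v w)$2 = 1"
  proof -
    have "B * w$1 + (1 - A) * w$2 = B" "(1 - B) * w$1 + A * w$2 = A"
      using that params_nonzero(1,2) by (simp_all add: Mw field_simps)
    from solve_face_system[OF this params_nonzero(7,1)] show ?thesis
      using that(1) by (simp add: w)
  qed
  show "w = vector [0, C, D]" if "w$1 = 0" "(M *v w)$2 = 1" "(M *v w)$3 = 1"
  proof -
    have "D * w$2 + (1 - C) * w$3 = D" "(1 - D) * w$2 + C * w$3 = C"
      using that params_nonzero(3,4) by (simp_all add: Mw field_simps)
    from solve_face_system[OF this params_nonzero(8,3)] show ?thesis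
      using that(1) by (simp add: w)
  qed
  show "w = vector [E, 0, F]" if "w$2 = 0" "(M *v w)$1 = 1" "(M *v w)$3 = 1"
  proof -
    have "F * w$1 + (1 - E) * w$3 = F" "(1 - F) * w$1 + E * w$3 = E"
      using that params_nonzero(5,6) by (simp_all add: Mw field_simps)
    from solve_face_system[OF this params_nonzero(9,5)] show ?thesis
      using that(1) by (simp add: w)
  qed
qed

lemma lv_matrix_fixed_points:
  assumes "w \<noteq> 0" "lotka_volterra M w = w"
  shows "w \<in> {e 1, e 2, e 3, vector [A, B, 0], vector [0, C, D], vector [E, 0, F]}
    \<or> (\<forall>i. (M *v w)$i = 1)"
proof -
  have coord: "w$i = 0 \<or> (M *v w)$i = 1" for i
    by (rule lotka_volterra_fixed_pointD[OF assms(2)])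
  note Mw = coord[unfolded matrix_vector_mult_3 lv_matrix_diag]
  note face = lv_matrix_face_fixed_points
  show ?thesis
  proof (cases "w$1 = 0"; cases "w$2 = 0"; cases "w$3 = 0")
    assume "w$1 = 0" "w$2 = 0" "w$3 = 0"
    with assms(1) show ?thesis
      by (simp add: vec_eq_iff forall_3)
  next
    assume "w$1 \<noteq> 0" "w$2 \<noteq> 0" "w$3 \<noteq> 0"
    then have "(M *v w)$i = 1" for i
      using coord[of i] exhaust_3[of i] by auto
    then show ?thesis
      by blast
  next
    assume "w$1 \<noteq> 0" "w$2 = 0" "w$3 = 0"
    then have "e 1 = w"
      using Mw[of 1] by (simp add: vec_eq_iff forall_3 e_def axis_def)
    then show ?thesis
      by auto
  next
    assume "w$1 = 0" "w$2 \<noteq> 0" "w$3 = 0"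
    then have "e 2 = w"
      using Mw[of 2] by (simp add: vec_eq_iff forall_3 e_def axis_def)
    then show ?thesis
      by auto
  next
    assume "w$1 = 0" "w$2 = 0" "w$3 \<noteq> 0"
    then have "e 3 = w"
      using Mw[of 3] by (simp add: vec_eq_iff forall_3 e_def axis_def)
    then show ?thesis
      by auto
  next
    assume "w$1 \<noteq> 0" "w$2 \<noteq> 0" "w$3 = 0"
    then show ?thesis
      using coord[of 1] coord[of 2] face(1) by auto
  next
    assume "w$1 = 0" "w$2 \<noteq> 0" "w$3 \<noteq> 0"
    then show ?thesis
      using coord[of 2] coord[of 3] face(2) by auto
  next
    assume "w$1 \<noteq> 0" "w$2 = 0" "w$3 \<noteq> 0"
    then show ?thesis
      using coord[of 1] coord[of 3] face(3) by auto
  qed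
qed

lemma Q_indep_vertex1: "Q_indep [-1, M$2$1 - 1, M$3$1 - 1]"
proof -
  \<comment> \<open>\<open>fs\<close> is \<open>A E\<close> times the list; each evaluation point isolates one further coefficient\<close>
  define fs :: "((nat \<Rightarrow> complex) \<Rightarrow> complex) list"
    where "fs = [\<lambda>x. - x 0 * x 4, \<lambda>x. (1 - x 1) * x 4 - x 0 * x 4, \<lambda>x. (1 - x 5) * x 0 - x 0 * x 4]"
  have "Q_indep (map (\<lambda>f. f (\<lambda>k. [A, B, C, D, E, F] ! k)) fs)" (is "Q_indep ?l")
  proof (rule Q_indep_map_eval_alg_indep[OF alg_indep])
    show "set fs \<subseteq> rat_polyfun 6"
      by (auto simp: fs_def intro!: rat_polyfun_intros)
    fix q :: "nat \<Rightarrow> rat"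
    assume rel: "\<And>x. (\<Sum>i<length fs. of_rat (q i) * (fs ! i) x) = 0"
    from rel[of "\<lambda>k. [-1, 0, 0, 0, 0, 0] ! k"] have "q 2 = 0"
      by (simp add: fs_def eval_nat_numeral)
    moreover from rel[of "\<lambda>k. [0, 0, 0, 0, -1, 0] ! k"] calculation have "q 1 = 0"
      by (simp add: fs_def eval_nat_numeral)
    moreover from rel[of "\<lambda>k. [-1, 0, 0, 0, -1, 0] ! k"] calculation have "q 0 = 0"
      by (simp add: fs_def eval_nat_numeral)
    ultimately show "\<forall>i<length fs. q i = 0"
      by (simp add: fs_def eval_nat_numeral less_Suc_eq)
  qed
  then have "Q_indep (map ((*) (1 / (A * E))) ?l)"
    using params_nonzero by (intro Q_indep_map_mult) simp_all
  moreover have "map ((*) (1 / (A * E))) ?l = [-1, M$2$1 - 1, M$3$1 - 1]"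
    using params_nonzero by (simp add: fs_def matrix_vector_mult_3 field_simps)
  ultimately show ?thesis
    by simp
qed

lemma Q_indep_vertex2: "Q_indep [-1, M$1$2 - 1, M$3$2 - 1]"
proof -
  define fs :: "((nat \<Rightarrow> complex) \<Rightarrow> complex) list"
    where "fs = [\<lambda>x. - x 1 * x 2, \<lambda>x. (1 - x 0) * x 2 - x 1 * x 2, \<lambda>x. (1 - x 3) * x 1 - x 1 * x 2]"
  have "Q_indep (map (\<lambda>f. f (\<lambda>k. [A, B, C, D, E, F] ! k)) fs)" (is "Q_indep ?l")
  proof (rule Q_indep_map_eval_alg_indep[OF alg_indep])
    show "set fs \<subseteq> rat_polyfun 6"
      by (auto simp: fs_def intro!: rat_polyfun_intros)
    fix q :: "nat \<Rightarrow> rat"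
    assume rel: "\<And>x. (\<Sum>i<length fs. of_rat (q i) * (fs ! i) x) = 0"
    from rel[of "\<lambda>k. [0, -1, 0, 0, 0, 0] ! k"] have "q 2 = 0"
      by (simp add: fs_def eval_nat_numeral)
    moreover from rel[of "\<lambda>k. [0, 0, -1, 0, 0, 0] ! k"] calculation have "q 1 = 0"
      by (simp add: fs_def eval_nat_numeral)
    moreover from rel[of "\<lambda>k. [0, -1, -1, 0, 0, 0] ! k"] calculation have "q 0 = 0"
      by (simp add: fs_def eval_nat_numeral)
    ultimately show "\<forall>i<length fs. q i = 0"
      by (simp add: fs_def eval_nat_numeral less_Suc_eq)
  qed
  then have "Q_indep (map ((*) (1 / (B * C))) ?l)"
    using params_nonzero by (intro Q_indep_map_mult) simp_all
  moreover have "map ((*) (1 / (B * C))) ?l = [-1, M$1$2 - 1, M$3$2 - 1]"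
    using params_nonzero by (simp add: fs_def matrix_vector_mult_3 field_simps)
  ultimately show ?thesis
    by simp
qed

lemma Q_indep_vertex3: "Q_indep [-1, M$1$3 - 1, M$2$3 - 1]"
proof -
  define fs :: "((nat \<Rightarrow> complex) \<Rightarrow> complex) list"
    where "fs = [\<lambda>x. - x 5 * x 3, \<lambda>x. (1 - x 4) * x 3 - x 5 * x 3, \<lambda>x. (1 - x 2) * x 5 - x 5 * x 3]"
  have "Q_indep (map (\<lambda>f. f (\<lambda>k. [A, B, C, D, E, F] ! k)) fs)" (is "Q_indep ?l")
  proof (rule Q_indep_map_eval_alg_indep[OF alg_indep])
    show "set fs \<subseteq> rat_polyfun 6"
      by (auto simp: fs_def intro!: rat_polyfun_intros)
    fix q :: "nat \<Rightarrow> rat"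
    assume rel: "\<And>x. (\<Sum>i<length fs. of_rat (q i) * (fs ! i) x) = 0"
    from rel[of "\<lambda>k. [0, 0, 0, 0, 0, -1] ! k"] have "q 2 = 0"
      by (simp add: fs_def eval_nat_numeral)
    moreover from rel[of "\<lambda>k. [0, 0, 0, -1, 0, 0] ! k"] calculation have "q 1 = 0"
      by (simp add: fs_def eval_nat_numeral)
    moreover from rel[of "\<lambda>k. [0, 0, 0, -1, 0, -1] ! k"] calculation have "q 0 = 0"
      by (simp add: fs_def eval_nat_numeral)
    ultimately show "\<forall>i<length fs. q i = 0"
      by (simp add: fs_def eval_nat_numeral less_Suc_eq)
  qed
  then have "Q_indep (map ((*) (1 / (D * F))) ?l)"
    using params_nonzero by (intro Q_indep_map_mult) simp_all
  moreover have "map ((*) (1 / (D * F))) ?l = [-1, M$1$3 - 1, M$2$3 - 1]"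
    using params_nonzero by (simp add: fs_def matrix_vector_mult_3 field_simps)
  ultimately show ?thesis
    by simp
qed

lemma Q_indep_face3: "Q_indep [-1, A + B - 1, (M *v vector [A, B, 0])$3 - 1]"
proof -
  define fs :: "((nat \<Rightarrow> complex) \<Rightarrow> complex) list"
    where "fs = [\<lambda>x. - x 2 * x 4, \<lambda>x. (x 0 + x 1 - 1) * x 2 * x 4,
          \<lambda>x. (1 - x 5) * x 0 * x 2 + (1 - x 3) * x 1 * x 4 - x 2 * x 4]"
  have "Q_indep (map (\<lambda>f. f (\<lambda>k. [A, B, C, D, E, F] ! k)) fs)" (is "Q_indep ?l")
  proof (rule Q_indep_map_eval_alg_indep[OF alg_indep])
    show "set fs \<subseteq> rat_polyfun 6"
      by (auto simp: fs_def intro!: rat_polyfun_intros)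
    fix q :: "nat \<Rightarrow> rat"
    assume rel: "\<And>x. (\<Sum>i<length fs. of_rat (q i) * (fs ! i) x) = 0"
    from rel[of "\<lambda>k. [-1, 0, -1, 0, 0, 0] ! k"] have "q 2 = 0"
      by (simp add: fs_def eval_nat_numeral)
    moreover from rel[of "\<lambda>k. [0, 1, -1, 0, -1, 0] ! k"] calculation have "q 0 = 0"
      by (simp add: fs_def eval_nat_numeral)
    moreover from rel[of "\<lambda>k. [0, 0, -1, 0, -1, 0] ! k"] calculation have "q 1 = 0"
      by (simp add: fs_def eval_nat_numeral)
    ultimately show "\<forall>i<length fs. q i = 0"
      by (simp add: fs_def eval_nat_numeral less_Suc_eq)
  qed
  then have "Q_indep (map ((*) (1 / (C * E))) ?l)"
    using params_nonzero by (intro Q_indep_map_mult) simp_all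
  moreover have "map ((*) (1 / (C * E))) ?l = [-1, A + B - 1, (M *v vector [A, B, 0])$3 - 1]"
    using params_nonzero by (simp add: fs_def matrix_vector_mult_3 field_simps)
  ultimately show ?thesis
    by simp
qed

lemma Q_indep_face1: "Q_indep [-1, C + D - 1, (M *v vector [0, C, D])$1 - 1]"
proof -
  define fs :: "((nat \<Rightarrow> complex) \<Rightarrow> complex) list"
    where "fs = [\<lambda>x. - x 1 * x 5, \<lambda>x. (x 2 + x 3 - 1) * x 1 * x 5,
          \<lambda>x. (1 - x 0) * x 2 * x 5 + (1 - x 4) * x 3 * x 1 - x 1 * x 5]"
  have "Q_indep (map (\<lambda>f. f (\<lambda>k. [A, B, C, D, E, F] ! k)) fs)" (is "Q_indep ?l")
  proof (rule Q_indep_map_eval_alg_indep[OF alg_indep])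
    show "set fs \<subseteq> rat_polyfun 6"
      by (auto simp: fs_def intro!: rat_polyfun_intros)
    fix q :: "nat \<Rightarrow> rat"
    assume rel: "\<And>x. (\<Sum>i<length fs. of_rat (q i) * (fs ! i) x) = 0"
    from rel[of "\<lambda>k. [0, -1, 0, -1, 0, 0] ! k"] have "q 2 = 0"
      by (simp add: fs_def eval_nat_numeral)
    moreover from rel[of "\<lambda>k. [0, -1, 0, 1, 0, -1] ! k"] calculation have "q 0 = 0"
      by (simp add: fs_def eval_nat_numeral)
    moreover from rel[of "\<lambda>k. [0, -1, 0, 0, 0, -1] ! k"] calculation have "q 1 = 0"
      by (simp add: fs_def eval_nat_numeral)
    ultimately show "\<forall>i<length fs. q i = 0"
      by (simp add: fs_def eval_nat_numeral less_Suc_eq)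
  qed
  then have "Q_indep (map ((*) (1 / (B * F))) ?l)"
    using params_nonzero by (intro Q_indep_map_mult) simp_all
  moreover have "map ((*) (1 / (B * F))) ?l = [-1, C + D - 1, (M *v vector [0, C, D])$1 - 1]"
    using params_nonzero by (simp add: fs_def matrix_vector_mult_3 field_simps)
  ultimately show ?thesis
    by simp
qed

lemma Q_indep_face2: "Q_indep [-1, E + F - 1, (M *v vector [E, 0, F])$2 - 1]"
proof -
  define fs :: "((nat \<Rightarrow> complex) \<Rightarrow> complex) list"
    where "fs = [\<lambda>x. - x 0 * x 3, \<lambda>x. (x 4 + x 5 - 1) * x 0 * x 3,
          \<lambda>x. (1 - x 1) * x 4 * x 3 + (1 - x 2) * x 5 * x 0 - x 0 * x 3]"
  have "Q_indep (map (\<lambda>f. f (\<lambda>k. [A, B, C, D, E, F] ! k)) fs)" (is "Q_indep ?l")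
  proof (rule Q_indep_map_eval_alg_indep[OF alg_indep])
    show "set fs \<subseteq> rat_polyfun 6"
      by (auto simp: fs_def intro!: rat_polyfun_intros)
    fix q :: "nat \<Rightarrow> rat"
    assume rel: "\<And>x. (\<Sum>i<length fs. of_rat (q i) * (fs ! i) x) = 0"
    from rel[of "\<lambda>k. [-1, 0, 0, 0, 0, -1] ! k"] have "q 2 = 0"
      by (simp add: fs_def eval_nat_numeral)
    moreover from rel[of "\<lambda>k. [-1, 0, 0, -1, 0, 1] ! k"] calculation have "q 0 = 0"
      by (simp add: fs_def eval_nat_numeral)
    moreover from rel[of "\<lambda>k. [-1, 0, 0, -1, 0, 0] ! k"] calculation have "q 1 = 0"
      by (simp add: fs_def eval_nat_numeral)
    ultimately show "\<forall>i<length fs. q i = 0"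
      by (simp add: fs_def eval_nat_numeral less_Suc_eq)
  qed
  then have "Q_indep (map ((*) (1 / (A * D))) ?l)"
    using params_nonzero by (intro Q_indep_map_mult) simp_all
  moreover have "map ((*) (1 / (A * D))) ?l = [-1, E + F - 1, (M *v vector [E, 0, F])$2 - 1]"
    using params_nonzero by (simp add: fs_def matrix_vector_mult_3 field_simps)
  ultimately show ?thesis
    by simp
qed

lemma interior_fixed_point_cramer:
  assumes "\<And>i. (M *v w)$i = 1"
  shows "det_poly A B C D E F * w$1 = A * E * cramer_poly1 A B C D E F"
    and "det_poly A B C D E F * w$2 = B * C * cramer_poly2 A B C D E F"
    and "det_poly A B C D E F * w$3 = D * F * cramer_poly3 A B C D E F"
proof -
  have "B * F * w$1 + (1 - A) * F * w$2 + (1 - E) * B * w$3 = B * F"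
    "(1 - B) * D * w$1 + A * D * w$2 + (1 - C) * A * w$3 = A * D"
    "(1 - F) * C * w$1 + (1 - D) * E * w$2 + C * E * w$3 = C * E"
    using assms[of 1] assms[of 2] assms[of 3] params_nonzero(1-6)
    by (simp_all add: matrix_vector_mult_3 field_simps)
  then show "det_poly A B C D E F * w$1 = A * E * cramer_poly1 A B C D E F"
    and "det_poly A B C D E F * w$2 = B * C * cramer_poly2 A B C D E F"
    and "det_poly A B C D E F * w$3 = D * F * cramer_poly3 A B C D E F"
    unfolding det_poly_def cramer_poly1_def cramer_poly2_def cramer_poly3_def by algebra+
qed

lemma Q_indep_interior:
  assumes "\<And>i. (M *v w)$i = 1"
  shows "Q_indep [1, w$1 + w$2 + w$3 - 1, (w$1 + w$2 + w$3 - 1)^2, w$1 * w$2 * w$3 * det M]"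
proof -
  define K where "K x = det_poly (x 0) (x 1) (x 2) (x 3) (x 4) (x 5)" for x :: "nat \<Rightarrow> complex"
  define W1 where "W1 x = cramer_poly1 (x 0) (x 1) (x 2) (x 3) (x 4) (x 5)" for x :: "nat \<Rightarrow> complex"
  define W2 where "W2 x = cramer_poly2 (x 0) (x 1) (x 2) (x 3) (x 4) (x 5)" for x :: "nat \<Rightarrow> complex"
  define W3 where "W3 x = cramer_poly3 (x 0) (x 1) (x 2) (x 3) (x 4) (x 5)" for x :: "nat \<Rightarrow> complex"
  define N where "N x = x 0 * x 4 * W1 x + x 1 * x 2 * W2 x + x 3 * x 5 * W3 x - K x" for x :: "nat \<Rightarrow> complex"
  define fs :: "((nat \<Rightarrow> complex) \<Rightarrow> complex) list"
    where "fs = [\<lambda>x. K x ^ 2, \<lambda>x. K x * N x, \<lambda>x. N x ^ 2, \<lambda>x. W1 x * W2 x * W3 x]"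
  note defs = fs_def N_def K_def W1_def W2_def W3_def det_poly_def cramer_poly1_def cramer_poly2_def
    cramer_poly3_def
  \<comment> \<open>\<open>fs\<close> evaluates to \<open>K\<^sup>2\<close> times the list, as \<open>K w\<^sub>1 = A E W1\<close> etc. and \<open>A B C D E F det M = K\<close>\<close>
  have "Q_indep (map (\<lambda>f. f (\<lambda>k. [A, B, C, D, E, F] ! k)) fs)" (is "Q_indep ?l")
  proof (rule Q_indep_map_eval_alg_indep[OF alg_indep])
    show "set fs \<subseteq> rat_polyfun 6"
      unfolding defs by (auto intro!: rat_polyfun_intros)
    fix q :: "nat \<Rightarrow> rat"
    assume rel: "\<And>x. (\<Sum>i<length fs. of_rat (q i) * (fs ! i) x) = 0"
    from rel[of "\<lambda>k. [-1, -1, -1, 2, 0, 0] ! k"] have "q 0 = 0"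
      by (simp add: defs eval_nat_numeral)
    moreover from rel[of "\<lambda>k. [-1, -1, -1, -1, 0, 0] ! k"] calculation have "q 3 = 0"
      by (simp add: defs eval_nat_numeral)
    moreover from rel[of "\<lambda>k. [-1, 0, -1, 0, -1, 1] ! k"] calculation have "q 2 = 0"
      by (simp add: defs eval_nat_numeral)
    moreover from rel[of "\<lambda>k. [-1, 0, -1, 0, 0, -1] ! k"] calculation have "q 1 = 0"
      by (simp add: defs eval_nat_numeral)
    ultimately show "\<forall>i<length fs. q i = 0"
      by (simp add: fs_def eval_nat_numeral less_Suc_eq)
  qed
  then have "Q_indep (map ((*) (1 / det_poly A B C D E F ^ 2)) ?l)"
    using params_nonzero by (intro Q_indep_map_mult) simp_all
  moreover have "map ((*) (1 / det_poly A B C D E F ^ 2)) ?l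
      = [1, w$1 + w$2 + w$3 - 1, (w$1 + w$2 + w$3 - 1)^2, w$1 * w$2 * w$3 * det M]"
  proof -
    have w: "w$1 = A * E * cramer_poly1 A B C D E F / det_poly A B C D E F"
      "w$2 = B * C * cramer_poly2 A B C D E F / det_poly A B C D E F"
      "w$3 = D * F * cramer_poly3 A B C D E F / det_poly A B C D E F"
      using interior_fixed_point_cramer[OF assms] params_nonzero(10) by (simp_all add: field_simps)
    have "det M = det_poly A B C D E F / (A * B * C * D * E * F)"
      using det_lv_matrix params_nonzero(1-6) by (simp add: field_simps)
    then show ?thesis
      using params_nonzero by (simp add: fs_def N_def K_def W1_def W2_def W3_def w field_simps power2_eq_square)
  qed
  ultimately show ?thesis
    by simp
qed

lemma lv_matrix_face_charpolys:
  shows "det (mat s - lv_jacobian M (vector [A, B, 0]))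
      = (s - 2) * (s - (A + B)) * (s - (M *v vector [A, B, 0])$3)"
    and "det (mat s - lv_jacobian M (vector [0, C, D]))
      = (s - 2) * (s - (C + D)) * (s - (M *v vector [0, C, D])$1)"
    and "det (mat s - lv_jacobian M (vector [E, 0, F]))
      = (s - 2) * (s - (E + F)) * (s - (M *v vector [E, 0, F])$2)"
proof -
  note face = lv_jacobian_charpoly_face[OF lv_matrix_diag]
  note coord = lotka_volterra_fixed_pointD[OF lotka_volterra_face_points(1)]
    lotka_volterra_fixed_pointD[OF lotka_volterra_face_points(2)]
    lotka_volterra_fixed_pointD[OF lotka_volterra_face_points(3)]
  have "(M *v vector [A, B, 0])$i = 1" if "i \<noteq> 3" for i
    using coord(1)[of i] that exhaust_3[of i] params_nonzero(1,2) by auto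
  from face[OF _ this] show "det (mat s - lv_jacobian M (vector [A, B, 0]))
      = (s - 2) * (s - (A + B)) * (s - (M *v vector [A, B, 0])$3)"
    by simp
  have "(M *v vector [0, C, D])$i = 1" if "i \<noteq> 1" for i
    using coord(2)[of i] that exhaust_3[of i] params_nonzero(3,4) by auto
  from face[OF _ this] show "det (mat s - lv_jacobian M (vector [0, C, D]))
      = (s - 2) * (s - (C + D)) * (s - (M *v vector [0, C, D])$1)"
    by simp
  have "(M *v vector [E, 0, F])$i = 1" if "i \<noteq> 2" for i
    using coord(3)[of i] that exhaust_3[of i] params_nonzero(5,6) by auto
  from face[OF _ this] show "det (mat s - lv_jacobian M (vector [E, 0, F]))
      = (s - 2) * (s - (E + F)) * (s - (M *v vector [E, 0, F])$2)"
    by simp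
qed

lemma lv_matrix_fixed_point_spectrum:
  assumes "w \<noteq> 0" "lotka_volterra M w = w"
  shows "\<exists>n2 n3. Q_indep [-1, n2, n3] \<and>
    (\<forall>s. det (mat s - lv_jacobian M w) = (s - 2) * (s - 1 - n2) * (s - 1 - n3))"
proof -
  note vertex = lv_jacobian_charpoly_vertex[OF lv_matrix_diag]
  note face = lv_matrix_face_charpolys
  from lv_matrix_fixed_points[OF assms] consider "w = e 1" | "w = e 2" | "w = e 3"
    | "w = vector [A, B, 0]" | "w = vector [0, C, D]" | "w = vector [E, 0, F]" | "\<forall>i. (M *v w)$i = 1"
    by blast
  then show ?thesis
  proof cases
    case 1
    then show ?thesis
      using Q_indep_vertex1 vertex(1) by (intro exI[of _ "M$2$1 - 1"] exI[of _ "M$3$1 - 1"]) auto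
  next
    case 2
    then show ?thesis
      using Q_indep_vertex2 vertex(2) by (intro exI[of _ "M$1$2 - 1"] exI[of _ "M$3$2 - 1"]) auto
  next
    case 3
    then show ?thesis
      using Q_indep_vertex3 vertex(3) by (intro exI[of _ "M$1$3 - 1"] exI[of _ "M$2$3 - 1"]) auto
  next
    case 4
    then show ?thesis
      using Q_indep_face3 face(1)
      by (intro exI[of _ "A + B - 1"] exI[of _ "(M *v vector [A, B, 0])$3 - 1"]) auto
  next
    case 5
    then show ?thesis
      using Q_indep_face1 face(2)
      by (intro exI[of _ "C + D - 1"] exI[of _ "(M *v vector [0, C, D])$1 - 1"]) auto
  next
    case 6
    then show ?thesis
      using Q_indep_face2 face(3)
      by (intro exI[of _ "E + F - 1"] exI[of _ "(M *v vector [E, 0, F])$2 - 1"]) auto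
  next
    case 7
    obtain n2 n3 where sum: "n2 + n3 = w$1 + w$2 + w$3 - 1"
      and prod: "n2 * n3 = w$1 * w$2 * w$3 * det M"
      using quadratic_roots_exist by blast
    show ?thesis
      using Q_indep_quadratic_roots[OF Q_indep_interior sum prod] 7
        lv_jacobian_charpoly_interior[OF lv_matrix_diag _ sum prod]
      by blast
  qed
qed

end

theorem proposition4p8:
  fixes p :: "complex^3 \<Rightarrow> complex^3" and g :: "complex^3^3"
  assumes "distinguished p g"
    and "g$1$3 = 0" and "g$2$1 = 0" and "g$3$2 = 0"
    and "alg_indep 6 (\<lambda>k. [g$1$1, g$1$2, g$2$2, g$2$3, g$3$1, g$3$3] ! k)"
  shows "(\<forall>i. semi_invariant p (\<lambda>x. x $ i)) \<and> property_E p"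
proof -
  interpret lv_family "g$1$1" "g$1$2" "g$2$2" "g$2$3" "g$3$1" "g$3$3"
    using assms(5) by unfold_locales
  have rows: "g$1 = vector [g$1$1, g$1$2, 0]" "g$2 = vector [0, g$2$2, g$2$3]"
    "g$3 = vector [g$3$1, 0, g$3$3]"
    using assms(2-4) by (simp_all add: vec_eq_iff forall_3)
  have p: "hom_quadratic p" "\<And>i. p (e i) = e i" "\<And>i. p (g$i) = g$i"
    using assms(1) unfolding distinguished_def idempotent_def by auto
  have "p = lotka_volterra M"
    using p(3)[of 1] p(3)[of 2] p(3)[of 3]
    by (intro hom_quadratic_eq_lotka_volterra[OF p(1,2)]) (simp_all only: rows[symmetric])
  moreover have "property_E (lotka_volterra M)"
    using lotka_volterra_eq_0D[OF lv_matrix_diag lv_matrix_principal_minors det_lv_matrix_nonzero]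
      lv_matrix_fixed_point_spectrum
    by (rule property_E_lotka_volterraI)
  ultimately show ?thesis
    using lotka_volterra_semi_invariant by simp
qed

end
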